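(* Let $k\ge 0$ and $m=2k+1$. Let $R_m(\hat K)=P_m(\hat K)+\mathrm{span}\{\hat x^m\hat y-\hat x\hat y^m\}$. If $\hat v\in R_m(\hat K)$ vanishes at all points of $G\cup I$, then $\hat v\equiv 0$.
   Context: $\hat K=[-1,1]^2$; $P_m(\hat K)$ is the space of polynomials of total degree $\le m$ on $\hat K$. Let $g_{-k},\dots,g_k$ be the zeros of the Legendre polynomial of degree $2k+1$ on $[-1,1]$. $G=\{(1,g_i),(-1,g_i),(g_i,1),(g_i,-1): i=-k,\dots,k\}$ is the set of $4(2k+1)$ Gauss–Legendre points on the boundary of $\hat K$. $I$ is a set of $(2k-1)(k-1)$ points in the interior of $\hat K$ (the standard Lagrange points) that is unisolvent for $P_{2k-3}(\hat K)$, i.e. every polynomial in $P_{2k-3}(\hat K)$ is uniquely determined by its values on $I$; $I=\emptyset$ when $k\le 1$. *)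

theory Defs
  imports "HOL-Computational_Algebra.Polynomial"
begin

fun legendre :: "nat \<Rightarrow> real poly" where
  "legendre 0 = 1"
| "legendre (Suc 0) = [:0, 1:]"
| "legendre (Suc (Suc n)) =
     smult (1 / real (n + 2))
       (smult (real (2 * n + 3)) ([:0, 1:] * legendre (Suc n)) - smult (real (n + 1)) (legendre n))"

definition poly2_space :: "nat \<Rightarrow> (real \<times> real \<Rightarrow> real) set" where
  "poly2_space n = {f. \<exists>c :: nat \<Rightarrow> nat \<Rightarrow> real.
      f = (\<lambda>(x, y). \<Sum>i\<le>n. \<Sum>j\<le>n - i. c i j * x ^ i * y ^ j)}"

definition R_space :: "nat \<Rightarrow> (real \<times> real \<Rightarrow> real) set" where
  "R_space m = {v. \<exists>p \<in> poly2_space m. \<exists>d :: real.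
      v = (\<lambda>(x, y). p (x, y) + d * (x ^ m * y - x * y ^ m))}"

definition gauss_nodes :: "nat \<Rightarrow> real set" where
  "gauss_nodes n = {g. -1 \<le> g \<and> g \<le> 1 \<and> poly (legendre n) g = 0}"

definition gauss_boundary :: "nat \<Rightarrow> (real \<times> real) set" where
  "gauss_boundary n = (\<Union>g \<in> gauss_nodes n. {(1, g), (-1, g), (g, 1), (g, -1)})"

definition unisolvent :: "nat \<Rightarrow> (real \<times> real) set \<Rightarrow> bool" where
  "unisolvent n S \<longleftrightarrow> (\<forall>p \<in> poly2_space n. \<forall>q \<in> poly2_space n. (\<forall>z \<in> S. p z = q z) \<longrightarrow> p = q)"

end

theory Submission
  imports Defs
begin

text \<open>On each edge of the square an element \<open>v\<close> of \<open>R\<^sub>m\<close> restricts to a polynomial of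
  degree at most \<open>m\<close>; vanishing at the \<open>m\<close> Gauss points, it is a multiple of the Legendre
  polynomial \<open>P\<^sub>m\<close>, whose \<open>m\<close> simple roots in \<open>(-1, 1)\<close> come from the classical interlacing
  argument. As \<open>m\<close> is odd, \<open>P\<^sub>m(\<plusminus>1) = \<plusminus>1\<close>, so going around the square the four multiples are
  \<open>\<plusminus>v(1,1)\<close> with alternating signs. Comparing top coefficients, to which \<open>x\<^sup>m y - x y\<^sup>m\<close>
  contributes with opposite signs on opposite edges, forces \<open>v(1,1) = 0\<close> and kills the
  extra term. Hence \<open>v \<in> P\<^sub>m\<close> vanishes on the boundary, so \<open>v = (x\<^sup>2 - 1)(y\<^sup>2 - 1) w\<close> with
  \<open>w \<in> P\<^sub>m\<^sub>-\<^sub>4 = P\<^sub>2\<^sub>k\<^sub>-\<^sub>3\<close>, and \<open>w\<close> vanishes on \<open>I\<close>, hence everywhere by unisolvence.\<close>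

section \<open>Real polynomials\<close>

lemma linear_factor_of_root:
  fixes p :: "'a::idom poly"
  assumes "poly p a = 0" "p \<noteq> 0"
  obtains q where "p = [:-a, 1:] * q" "degree p = Suc (degree q)" "lead_coeff q = lead_coeff p"
proof -
  obtain q where p: "p = [:-a, 1:] * q"
    using assms(1) by (auto simp: poly_eq_0_iff_dvd)
  with assms(2) have "q \<noteq> 0" by auto
  then have "degree p = Suc (degree q)"
    unfolding p by (subst degree_mult_eq) auto
  moreover have "lead_coeff q = lead_coeff p"
    unfolding p lead_coeff_mult by simp
  ultimately show ?thesis using that p by blast
qed

lemma sign_poly_from_roots:
  fixes p :: "real poly"
  assumes "degree p = n" "lead_coeff p > 0" "inj_on r {..<n}"
    and "\<forall>i<n. poly p (r i) = 0" "x \<notin> r ` {..<n}"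
  shows "(-1) ^ card {i. i < n \<and> x < r i} * poly p x > 0"
  using assms
proof (induction n arbitrary: p)
  case 0
  then have "p = [:lead_coeff p:]" by (metis degree_0_id)
  then have "poly p x = lead_coeff p" by (metis poly_pCons poly_0 mult_zero_right add.right_neutral)
  with 0 show ?case by simp
next
  case (Suc n)
  have "p \<noteq> 0" using Suc.prems(2) by auto
  then obtain q where pq: "p = [:- r n, 1:] * q"
    and dq: "degree p = Suc (degree q)" and lq: "lead_coeff q = lead_coeff p"
    using linear_factor_of_root Suc.prems(4) by blast
  have "degree q = n" "lead_coeff q > 0" using dq lq Suc.prems(1,2) by simp_all
  moreover have "\<forall>i<n. poly q (r i) = 0"
  proof (intro allI impI)
    fix i assume "i < n"
    then have "r i \<noteq> r n" using Suc.prems(3) by (auto dest: inj_onD)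
    moreover have "poly p (r i) = 0" using Suc.prems(4) \<open>i < n\<close> by simp
    ultimately show "poly q (r i) = 0" using pq by simp
  qed
  moreover have "inj_on r {..<n}" "x \<notin> r ` {..<n}"
    using Suc.prems(3,5) by (auto intro: inj_on_subset)
  ultimately have IH: "(-1) ^ card {i. i < n \<and> x < r i} * poly q x > 0"
    using Suc.IH by blast
  have "x \<noteq> r n" using Suc.prems(5) by auto
  show ?case
  proof (cases "x < r n")
    case True
    then have "{i. i < Suc n \<and> x < r i} = insert n {i. i < n \<and> x < r i}" by auto
    then have "card {i. i < Suc n \<and> x < r i} = Suc (card {i. i < n \<and> x < r i})" by simp
    then have "(-1) ^ card {i. i < Suc n \<and> x < r i} * poly p x
        = ((-1) ^ card {i. i < n \<and> x < r i} * poly q x) * (r n - x)"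
      by (simp only: pq poly_mult power_Suc) (simp add: algebra_simps)
    then show ?thesis using IH True by simp
  next
    case False
    then have "{i. i < Suc n \<and> x < r i} = {i. i < n \<and> x < r i}"
      using less_Suc_eq by auto
    then have "(-1) ^ card {i. i < Suc n \<and> x < r i} * poly p x
        = ((-1) ^ card {i. i < n \<and> x < r i} * poly q x) * (x - r n)"
      by (simp only: pq poly_mult) (simp add: algebra_simps)
    then show ?thesis using IH False \<open>x \<noteq> r n\<close> by simp
  qed
qed

lemma poly_roots_between_sign_changes:
  fixes p :: "real poly"
  assumes "\<And>j. j < M \<Longrightarrow> e j < e (Suc j) \<and> poly p (e j) * poly p (e (Suc j)) < 0"
  obtains s where "\<And>j. j < M \<Longrightarrow> e j < s j \<and> s j < e (Suc j) \<and> poly p (s j) = 0"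
proof -
  have "\<forall>j. \<exists>x. j < M \<longrightarrow> e j < x \<and> x < e (Suc j) \<and> poly p x = 0"
    using assms poly_IVT by blast
  then obtain s where "\<forall>j. j < M \<longrightarrow> e j < s j \<and> s j < e (Suc j) \<and> poly p (s j) = 0"
    by (rule choice[THEN exE])
  then show ?thesis using that by blast
qed

lemma poly_eq_0_if_many_roots:
  fixes p :: "'a::idom poly"
  assumes "finite S" "degree p < card S" "\<forall>x\<in>S. poly p x = 0"
  shows "p = 0"
proof (rule ccontr)
  assume "p \<noteq> 0"
  then have "card S \<le> card {x. poly p x = 0}"
    using assms(3) poly_roots_finite by (intro card_mono) auto
  also have "\<dots> \<le> degree p" using card_poly_roots_bound[OF \<open>p \<noteq> 0\<close>] .
  finally show False using assms(2) by simp
qed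

lemma poly_eq_sum_coeffs:
  fixes p :: "'a::comm_semiring_1 poly"
  assumes "degree p \<le> N"
  shows "poly p x = (\<Sum>i\<le>N. coeff p i * x ^ i)"
proof -
  have "poly p x = poly (\<Sum>i\<le>N. monom (coeff p i) i) x"
    using assms by (simp add: poly_as_sum_of_monoms')
  then show ?thesis by (simp add: poly_sum poly_monom)
qed

lemma x_sq_minus_1_dvd:
  fixes p :: "real poly"
  assumes "poly p 1 = 0" "poly p (-1) = 0"
  shows "[:-1, 0, 1:] dvd p"
proof -
  obtain q where q: "p = [:-1, 1:] * q"
    using assms(1) by (auto simp: poly_eq_0_iff_dvd)
  have "poly q (-1) = 0" using assms(2) by (simp add: q)
  then obtain q' where q': "q = [:1, 1:] * q'"
    by (auto simp: poly_eq_0_iff_dvd)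
  have "[:-1, 0, 1:] = [:-1, 1:] * [:1, 1 :: real:]" by simp
  then have "p = [:-1, 0, 1:] * q'" by (simp only: q q' mult.assoc)
  then show ?thesis by (rule dvdI)
qed

section \<open>Legendre polynomials and their roots\<close>

lemma poly_legendre_Suc_Suc:
  "poly (legendre (Suc (Suc n))) x =
     (real (2 * n + 3) * x * poly (legendre (Suc n)) x - real (n + 1) * poly (legendre n) x) / real (n + 2)"
  by (simp add: field_simps)

lemma poly_legendre_one [simp]: "poly (legendre n) 1 = 1"
proof (induction n rule: legendre.induct)
  case (3 n)
  then show ?case by (simp only: poly_legendre_Suc_Suc) (simp add: field_simps)
qed auto

lemma poly_legendre_neg_one: "poly (legendre n) (-1) = (-1) ^ n"
proof (induction n rule: legendre.induct)
  case (3 n)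
  then show ?case by (simp only: poly_legendre_Suc_Suc) (simp add: field_simps)
qed auto

lemma degree_lead_coeff_legendre: "degree (legendre n) = n \<and> lead_coeff (legendre n) > 0"
proof (induction n rule: legendre.induct)
  case (3 n)
  define p q where "p = legendre (Suc n)" and "q = legendre n"
  have dp: "degree p = Suc n" and cp: "coeff p (Suc n) > 0" and dq: "degree q = n"
    using 3 by (auto simp: p_def q_def)
  have L: "legendre (Suc (Suc n)) =
      smult (1 / real (n + 2)) (smult (real (2 * n + 3)) ([:0, 1:] * p) - smult (real (n + 1)) q)"
    by (simp add: p_def q_def)
  have "coeff q (Suc (Suc n)) = 0"
    using dq by (simp add: coeff_eq_0)
  then have top_coeff:
      "coeff (legendre (Suc (Suc n))) (Suc (Suc n)) = real (2 * n + 3) / real (n + 2) * coeff p (Suc n)"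
    unfolding L by (simp add: coeff_pCons)
  have top: "coeff (legendre (Suc (Suc n))) (Suc (Suc n)) > 0"
    unfolding top_coeff using cp by simp
  have "degree ([:0, 1:] * p) \<le> Suc (Suc n)"
    using degree_mult_le[of "[:0, 1:]" p] dp by simp
  then have "degree (legendre (Suc (Suc n))) \<le> Suc (Suc n)"
    unfolding L using dq by (meson degree_diff_le degree_smult_le le_SucI order_trans)
  moreover have "Suc (Suc n) \<le> degree (legendre (Suc (Suc n)))"
    using top by (intro le_degree) (metis less_irrefl)
  ultimately have "degree (legendre (Suc (Suc n))) = Suc (Suc n)" by (rule antisym)
  with top show ?case by (simp del: legendre.simps)
qed auto

lemma degree_legendre [simp]: "degree (legendre n) = n"
  using degree_lead_coeff_legendre by blast

lemma lead_coeff_legendre_pos: "lead_coeff (legendre n) > 0"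
  using degree_lead_coeff_legendre by blast

text \<open>\<open>r\<close> lists the roots of \<open>P\<^sub>n\<close> in increasing order; the sign condition says that
  \<open>P\<^sub>n\<^sub>-\<^sub>1\<close> alternates in sign along them, i.e. the roots of the two polynomials interlace.\<close>
definition legendre_roots_interlaced :: "nat \<Rightarrow> (nat \<Rightarrow> real) \<Rightarrow> bool" where
  "legendre_roots_interlaced n r \<longleftrightarrow> strict_mono_on {..<n} r \<and>
     (\<forall>i<n. r i \<in> {-1<..<1} \<and> poly (legendre n) (r i) = 0 \<and>
        (-1) ^ (n - 1 - i) * poly (legendre (n - 1)) (r i) > 0)"

lemma sign_legendre_Suc_at_interlaced_roots:
  assumes "legendre_roots_interlaced n r" "i < n"
  shows "(-1) ^ (n - i) * poly (legendre (Suc n)) (r i) > 0"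
proof -
  obtain n' where n: "n = Suc n'" using assms(2) by (cases n) auto
  have root: "poly (legendre n) (r i) = 0"
    and sign: "(-1) ^ (n - 1 - i) * poly (legendre n') (r i) > 0"
    using assms by (auto simp: legendre_roots_interlaced_def n)
  have "poly (legendre (Suc n)) (r i) = - (real n / real (n + 1)) * poly (legendre n') (r i)"
    using root unfolding n poly_legendre_Suc_Suc by (simp add: field_simps)
  moreover have "(-1 :: real) ^ (n - i) = - ((-1) ^ (n - 1 - i))"
    using assms(2) by (simp add: n Suc_diff_le)
  ultimately have "(-1) ^ (n - i) * poly (legendre (Suc n)) (r i)
      = real n / real (n + 1) * ((-1) ^ (n - 1 - i) * poly (legendre n') (r i))"
    by simp
  then show ?thesis using sign n by simp
qed

definition padded_roots :: "nat \<Rightarrow> (nat \<Rightarrow> real) \<Rightarrow> nat \<Rightarrow> real" where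
  "padded_roots n r j = (if j = 0 then -1 else if j \<le> n then r (j - 1) else 1)"

lemma strict_mono_on_padded_roots:
  assumes r: "legendre_roots_interlaced n r"
  shows "strict_mono_on {..Suc n} (padded_roots n r)"
proof (rule strict_mono_onI)
  have r_mono: "strict_mono_on {..<n} r" and r_bounds: "\<And>i. i < n \<Longrightarrow> r i \<in> {-1<..<1}"
    using r by (auto simp: legendre_roots_interlaced_def)
  fix i j assume ij: "i \<in> {..Suc n}" "j \<in> {..Suc n}" "i < j"
  consider "i = 0" "j \<le> n" | "j = Suc n" | "0 < i" "j \<le> n"
    using ij by fastforce
  then show "padded_roots n r i < padded_roots n r j"
  proof cases
    case 1
    then show ?thesis using ij r_bounds[of "j - 1"] by (simp add: padded_roots_def)
  next
    case 2
    then show ?thesis using ij r_bounds[of "i - 1"] by (simp add: padded_roots_def)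
  next
    case 3
    then show ?thesis
      using ij strict_mono_onD[OF r_mono, of "i - 1" "j - 1"] by (simp add: padded_roots_def)
  qed
qed

lemma padded_roots_le:
  assumes "legendre_roots_interlaced n r" "i \<le> j" "j \<le> Suc n"
  shows "padded_roots n r i \<le> padded_roots n r j"
  using assms by (intro strict_mono_on_leD[OF strict_mono_on_padded_roots]) auto

lemma sign_legendre_Suc_at_padded_roots:
  assumes r: "legendre_roots_interlaced n r" and j: "j \<le> Suc n"
  shows "(-1) ^ (Suc n - j) * poly (legendre (Suc n)) (padded_roots n r j) > 0"
proof -
  consider "j = 0" | "j = Suc n" | "0 < j" "j \<le> n" using j by (metis le_SucE neq0_conv)
  then show ?thesis
  proof cases
    case 1
    then show ?thesis by (simp add: padded_roots_def poly_legendre_neg_one flip: power_add)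
  next
    case 2
    then show ?thesis by (simp add: padded_roots_def)
  next
    case 3
    then have "(-1) ^ (n - (j - 1)) * poly (legendre (Suc n)) (r (j - 1)) > 0"
      by (intro sign_legendre_Suc_at_interlaced_roots[OF r]) auto
    moreover have "padded_roots n r j = r (j - 1)" "Suc n - j = n - (j - 1)"
      using 3 by (auto simp: padded_roots_def)
    ultimately show ?thesis by (simp only:)
  qed
qed

lemma legendre_roots_interlaced_in_gaps:
  assumes r: "legendre_roots_interlaced n r"
    and s: "\<And>j. j < Suc n \<Longrightarrow> padded_roots n r j < s j \<and> s j < padded_roots n r (Suc j)
      \<and> poly (legendre (Suc n)) (s j) = 0"
  shows "legendre_roots_interlaced (Suc n) s"
  unfolding legendre_roots_interlaced_def
proof (intro conjI allI impI strict_mono_onI)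
  note e_le = padded_roots_le[OF r]
  have r_mono: "strict_mono_on {..<n} r" and r_root: "\<And>i. i < n \<Longrightarrow> poly (legendre n) (r i) = 0"
    using r by (auto simp: legendre_roots_interlaced_def)
  fix j assume j: "j < Suc n"
  have s_vs_r: "(s j < r i \<longleftrightarrow> j \<le> i) \<and> s j \<noteq> r i" if "i < n" for i
  proof (cases "j \<le> i")
    case True
    then have "s j < r i"
      using s[OF j] e_le[of "Suc j" "Suc i"] that j by (simp add: padded_roots_def)
    then show ?thesis using True by simp
  next
    case False
    then have "r i < s j"
      using s[OF j] e_le[of "Suc i" j] that j by (simp add: padded_roots_def)
    then show ?thesis using False by simp
  qed
  show "s j \<in> {-1<..<1}"
    using s[OF j] e_le[of 0 j] e_le[of "Suc j" "Suc n"] j by (auto simp: padded_roots_def)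
  show "poly (legendre (Suc n)) (s j) = 0" using s[OF j] by simp
  have "{i. i < n \<and> s j < r i} = {j..<n}" using s_vs_r by auto
  moreover have "(-1) ^ card {i. i < n \<and> s j < r i} * poly (legendre n) (s j) > 0"
    using r_root s_vs_r lead_coeff_legendre_pos strict_mono_on_imp_inj_on[OF r_mono]
    by (intro sign_poly_from_roots) auto
  ultimately show "(-1) ^ (Suc n - 1 - j) * poly (legendre (Suc n - 1)) (s j) > 0"
    by simp
next
  fix i j assume "i \<in> {..<Suc n}" "j \<in> {..<Suc n}" "i < j"
  then show "s i < s j" using s[of i] s[of j] padded_roots_le[OF r, of "Suc i" j] by force
qed

lemma legendre_roots_interlaced_Suc:
  assumes r: "legendre_roots_interlaced n r"
  shows "\<exists>s. legendre_roots_interlaced (Suc n) s"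
proof -
  let ?e = "padded_roots n r" and ?P = "legendre (Suc n)"
  have sign_change: "?e j < ?e (Suc j) \<and> poly ?P (?e j) * poly ?P (?e (Suc j)) < 0"
    if "j < Suc n" for j
  proof
    show "?e j < ?e (Suc j)"
      using that by (intro strict_mono_onD[OF strict_mono_on_padded_roots[OF r]]) auto
    have "(-1 :: real) ^ (Suc n - j) = - ((-1) ^ (Suc n - Suc j))"
      using that by (simp add: Suc_diff_le)
    then show "poly ?P (?e j) * poly ?P (?e (Suc j)) < 0"
      using sign_legendre_Suc_at_padded_roots[OF r, of j]
        sign_legendre_Suc_at_padded_roots[OF r, of "Suc j"] that
      by (auto simp: zero_less_mult_iff mult_less_0_iff)
  qed
  obtain s where "\<And>j. j < Suc n \<Longrightarrow> ?e j < s j \<and> s j < ?e (Suc j) \<and> poly ?P (s j) = 0"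
    using poly_roots_between_sign_changes[of "Suc n" ?e ?P] sign_change by blast
  then show ?thesis using legendre_roots_interlaced_in_gaps[OF r] by blast
qed

lemma legendre_roots_interlaced_exists: "\<exists>r. legendre_roots_interlaced n r"
proof (induction n)
  case 0
  have "legendre_roots_interlaced 0 (\<lambda>_. 0)"
    by (simp add: legendre_roots_interlaced_def)
  then show ?case by blast
next
  case (Suc n)
  then show ?case using legendre_roots_interlaced_Suc by blast
qed

lemma gauss_nodes_subset_roots: "gauss_nodes n \<subseteq> {x. poly (legendre n) x = 0}"
  by (auto simp: gauss_nodes_def)

lemma finite_gauss_nodes: "finite (gauss_nodes n)"
proof -
  have "legendre n \<noteq> 0" using lead_coeff_legendre_pos[of n] by auto
  then show ?thesis by (rule finite_subset[OF gauss_nodes_subset_roots poly_roots_finite])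
qed

lemma card_gauss_nodes: "card (gauss_nodes n) = n"
proof (rule antisym)
  have "legendre n \<noteq> 0" using lead_coeff_legendre_pos[of n] by auto
  then have "card (gauss_nodes n) \<le> card {x. poly (legendre n) x = 0}"
    by (intro card_mono poly_roots_finite gauss_nodes_subset_roots)
  also have "\<dots> \<le> n"
    using card_poly_roots_bound[OF \<open>legendre n \<noteq> 0\<close>] by simp
  finally show "card (gauss_nodes n) \<le> n" .
  obtain r where r: "legendre_roots_interlaced n r"
    using legendre_roots_interlaced_exists by blast
  then have "inj_on r {..<n}"
    using strict_mono_on_imp_inj_on by (auto simp: legendre_roots_interlaced_def)
  then have "n = card (r ` {..<n})"
    by (simp add: card_image)
  also have "\<dots> \<le> card (gauss_nodes n)"
  proof (intro card_mono finite_gauss_nodes subsetI)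
    fix x assume "x \<in> r ` {..<n}"
    then obtain i where "i < n" "x = r i" by blast
    with r have "x \<in> {-1<..<1}" "poly (legendre n) x = 0"
      by (auto simp: legendre_roots_interlaced_def)
    then show "x \<in> gauss_nodes n" by (simp add: gauss_nodes_def)
  qed
  finally show "n \<le> card (gauss_nodes n)" .
qed

lemma legendre_multiple_if_vanishing_on_gauss_nodes:
  fixes q :: "real poly"
  assumes "degree q \<le> n" "\<forall>g\<in>gauss_nodes n. poly q g = 0"
  shows "q = smult (poly q 1) (legendre n)"
proof -
  let ?h = "q - smult (poly q 1) (legendre n)"
  have "degree ?h \<le> n"
    using assms(1) by (metis degree_diff_le degree_smult_le degree_legendre)
  moreover have "1 \<notin> gauss_nodes n" by (simp add: gauss_nodes_def)
  then have "card (insert 1 (gauss_nodes n)) = Suc n"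
    by (simp add: finite_gauss_nodes card_gauss_nodes)
  moreover have "\<forall>x\<in>insert 1 (gauss_nodes n). poly ?h x = 0"
    using assms(2) gauss_nodes_subset_roots by auto
  ultimately have "?h = 0"
    using poly_eq_0_if_many_roots[of "insert 1 (gauss_nodes n)" ?h] finite_gauss_nodes by simp
  then show ?thesis by simp
qed

section \<open>Bivariate polynomials as coefficient arrays\<close>

definition poly2 :: "nat \<Rightarrow> (nat \<Rightarrow> nat \<Rightarrow> real) \<Rightarrow> real \<Rightarrow> real \<Rightarrow> real" where
  "poly2 N c x y = (\<Sum>i\<le>N. \<Sum>j\<le>N. c i j * x ^ i * y ^ j)"

text \<open>A strict bound, so that lowering it by 2 for each division by \<open>x\<^sup>2 - 1\<close> stays correct
  under truncated subtraction: \<open>total_degree_less 0\<close> holds only for the zero array.\<close>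
definition total_degree_less :: "nat \<Rightarrow> (nat \<Rightarrow> nat \<Rightarrow> real) \<Rightarrow> bool" where
  "total_degree_less n c \<longleftrightarrow> (\<forall>i j. n \<le> i + j \<longrightarrow> c i j = 0)"

lemma total_degree_less_transpose:
  "total_degree_less n (\<lambda>i j. c j i) \<longleftrightarrow> total_degree_less n c"
  by (auto simp: total_degree_less_def add.commute)

lemma poly2_transpose: "poly2 N (\<lambda>i j. c j i) x y = poly2 N c y x"
  unfolding poly2_def by (subst sum.swap) (simp add: algebra_simps)

lemma poly2_by_powers_of_y: "poly2 N c x y = (\<Sum>j\<le>N. (\<Sum>i\<le>N. c i j * x ^ i) * y ^ j)"
  unfolding poly2_def by (subst sum.swap) (simp add: sum_distrib_right)

lemma poly2_by_powers_of_x: "poly2 N c x y = (\<Sum>i\<le>N. (\<Sum>j\<le>N. c i j * y ^ j) * x ^ i)"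
  unfolding poly2_def by (simp add: sum_distrib_left sum_distrib_right mult_ac)

lemma poly2_eq_0_if_total_degree_less_0: "total_degree_less 0 w \<Longrightarrow> poly2 N w x y = 0"
  unfolding total_degree_less_def poly2_def by simp

lemma sum_square_eq_sum_triangle:
  fixes f :: "nat \<Rightarrow> nat \<Rightarrow> 'a::comm_monoid_add"
  assumes "n \<le> N" "\<And>i j. n < i + j \<Longrightarrow> f i j = 0"
  shows "(\<Sum>i\<le>N. \<Sum>j\<le>N. f i j) = (\<Sum>i\<le>n. \<Sum>j\<le>n - i. f i j)"
proof -
  have "(\<Sum>i\<le>N. \<Sum>j\<le>N. f i j) = (\<Sum>i\<le>n. \<Sum>j\<le>N. f i j)"
    using assms by (intro sum.mono_neutral_right) auto
  also have "\<dots> = (\<Sum>i\<le>n. \<Sum>j\<le>n - i. f i j)"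
  proof (rule sum.cong[OF refl])
    fix i assume "i \<in> {..n}"
    then show "(\<Sum>j\<le>N. f i j) = (\<Sum>j\<le>n - i. f i j)"
      using assms(1) by (intro sum.mono_neutral_right) (auto intro!: assms(2))
  qed
  finally show ?thesis .
qed

lemma poly2_space_iff_poly2:
  assumes "n \<le> N"
  shows "p \<in> poly2_space n \<longleftrightarrow>
    (\<exists>c. total_degree_less (Suc n) c \<and> p = (\<lambda>(x, y). poly2 N c x y))"
proof
  assume "p \<in> poly2_space n"
  then obtain c where p: "p = (\<lambda>(x, y). \<Sum>i\<le>n. \<Sum>j\<le>n - i. c i j * x ^ i * y ^ j)"
    by (auto simp: poly2_space_def)
  define c' where "c' i j = (if i + j \<le> n then c i j else 0)" for i j
  have "poly2 N c' x y = (\<Sum>i\<le>n. \<Sum>j\<le>n - i. c' i j * x ^ i * y ^ j)" for x y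
    unfolding poly2_def using assms by (intro sum_square_eq_sum_triangle) (auto simp: c'_def)
  also have "\<dots> x y = (\<Sum>i\<le>n. \<Sum>j\<le>n - i. c i j * x ^ i * y ^ j)" for x y
    by (intro sum.cong refl) (auto simp: c'_def)
  finally have "p = (\<lambda>(x, y). poly2 N c' x y)" by (auto simp: p)
  moreover have "total_degree_less (Suc n) c'" by (auto simp: total_degree_less_def c'_def)
  ultimately show "\<exists>c. total_degree_less (Suc n) c \<and> p = (\<lambda>(x, y). poly2 N c x y)" by blast
next
  assume "\<exists>c. total_degree_less (Suc n) c \<and> p = (\<lambda>(x, y). poly2 N c x y)"
  then obtain c where c: "total_degree_less (Suc n) c" and p: "p = (\<lambda>(x, y). poly2 N c x y)"
    by blast
  have "poly2 N c x y = (\<Sum>i\<le>n. \<Sum>j\<le>n - i. c i j * x ^ i * y ^ j)" for x y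
    unfolding poly2_def using assms c by (intro sum_square_eq_sum_triangle) (auto simp: total_degree_less_def)
  then show "p \<in> poly2_space n" unfolding poly2_space_def p by (auto intro!: exI[of _ c])
qed

lemma poly2_eq_0_on_line_if_cofinite:
  assumes "finite F" "\<And>x. x \<notin> F \<Longrightarrow> poly2 N c x y = 0"
  shows "poly2 N c x y = 0"
proof -
  define a where "a i = (\<Sum>j\<le>N. c i j * y ^ j)" for i
  have "{x. (\<Sum>i\<le>N. a i * x ^ i) = 0} \<supseteq> - F"
    using assms(2) by (auto simp: a_def poly2_by_powers_of_x)
  then have "infinite {x. (\<Sum>i\<le>N. a i * x ^ i) = 0}"
    using assms(1) infinite_UNIV_char_0 finite_compl finite_subset by (metis (no_types, lifting))
  then have "\<forall>i\<le>N. a i = 0" using polyfun_finite_roots by blast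
  then show ?thesis by (simp add: a_def poly2_by_powers_of_x)
qed

definition y_coeff_poly :: "nat \<Rightarrow> (nat \<Rightarrow> nat \<Rightarrow> real) \<Rightarrow> nat \<Rightarrow> real poly" where
  "y_coeff_poly N a j = (\<Sum>i\<le>N. monom (a i j) i)"

lemma poly_y_coeff_poly: "poly (y_coeff_poly N a j) x = (\<Sum>i\<le>N. a i j * x ^ i)"
  by (simp add: y_coeff_poly_def poly_sum poly_monom)

lemma coeff_y_coeff_poly: "coeff (y_coeff_poly N a j) i = (if i \<le> N then a i j else 0)"
  by (simp add: y_coeff_poly_def coeff_sum)

lemma degree_y_coeff_poly:
  assumes "total_degree_less n a" "y_coeff_poly N a j \<noteq> 0"
  shows "degree (y_coeff_poly N a j) \<le> N" "degree (y_coeff_poly N a j) + j < n"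
proof -
  have "coeff (y_coeff_poly N a j) (degree (y_coeff_poly N a j)) \<noteq> 0"
    using assms(2) by simp
  then have "degree (y_coeff_poly N a j) \<le> N" "a (degree (y_coeff_poly N a j)) j \<noteq> 0"
    by (auto simp: coeff_y_coeff_poly split: if_splits)
  then show "degree (y_coeff_poly N a j) \<le> N" "degree (y_coeff_poly N a j) + j < n"
    using assms(1) by (auto simp: total_degree_less_def not_less[symmetric])
qed

lemma y_coeff_poly_root:
  assumes "\<And>y. poly2 N a s y = 0" "j \<le> N"
  shows "poly (y_coeff_poly N a j) s = 0"
proof -
  have "\<forall>y. (\<Sum>j\<le>N. poly (y_coeff_poly N a j) s * y ^ j) = 0"
    using assms(1) by (simp add: poly_y_coeff_poly poly2_by_powers_of_y)
  then show ?thesis using assms(2) by (auto simp: polyfun_eq_0)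
qed

lemma poly2_factor_x_sq_minus_1:
  assumes a: "total_degree_less n a"
    and "\<And>y. poly2 N a 1 y = 0" "\<And>y. poly2 N a (-1) y = 0"
  obtains b where "total_degree_less (n - 2) b" "\<And>x y. poly2 N a x y = (x^2 - 1) * poly2 N b x y"
proof -
  define D :: "real poly" where "D = [:-1, 0, 1:]"
  define Q where "Q j = y_coeff_poly N a j div D" for j
  have "D dvd y_coeff_poly N a j" if "j \<le> N" for j
    unfolding D_def by (intro x_sq_minus_1_dvd y_coeff_poly_root assms(2,3) that)
  then have Q: "y_coeff_poly N a j = D * Q j" if "j \<le> N" for j
    using that by (simp add: Q_def)
  have coeff_Q: "coeff (Q j) i = 0" if j: "j \<le> N" and "n \<le> i + j + 2 \<or> N < i" for i j
  proof (rule ccontr)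
    assume "coeff (Q j) i \<noteq> 0"
    then have "Q j \<noteq> 0" "i \<le> degree (Q j)" by (auto intro: le_degree)
    moreover have "D \<noteq> 0" by (simp add: D_def)
    ultimately have "y_coeff_poly N a j \<noteq> 0" "i + 2 \<le> degree (y_coeff_poly N a j)"
      by (simp_all add: Q[OF j] degree_mult_eq) (simp add: D_def)
    with degree_y_coeff_poly[OF a] show False using that by fastforce
  qed
  define b where "b i j = (if j \<le> N then coeff (Q j) i else 0)" for i j
  have "total_degree_less (n - 2) b"
    by (auto simp: total_degree_less_def b_def le_diff_conv intro!: coeff_Q)
  moreover have "poly2 N a x y = (x^2 - 1) * poly2 N b x y" for x y
  proof -
    have "poly (Q j) x = (\<Sum>i\<le>N. b i j * x ^ i)" if "j \<le> N" for j
      using that coeff_Q by (subst poly_eq_sum_coeffs[of _ N]) (auto intro: degree_le simp: b_def)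
    then have factor: "poly (y_coeff_poly N a j) x = (x^2 - 1) * (\<Sum>i\<le>N. b i j * x ^ i)"
      if "j \<le> N" for j
      using that by (simp add: Q D_def power2_eq_square algebra_simps)
    have "poly2 N a x y = (\<Sum>j\<le>N. poly (y_coeff_poly N a j) x * y ^ j)"
      by (simp add: poly2_by_powers_of_y poly_y_coeff_poly)
    also have "\<dots> = (\<Sum>j\<le>N. (x^2 - 1) * ((\<Sum>i\<le>N. b i j * x ^ i) * y ^ j))"
      by (intro sum.cong refl) (simp add: factor mult.assoc)
    also have "\<dots> = (x^2 - 1) * poly2 N b x y"
      by (simp add: poly2_by_powers_of_y sum_distrib_left)
    finally show ?thesis .
  qed
  ultimately show ?thesis using that by blast
qed

lemma poly2_factor_boundary:
  assumes a: "total_degree_less n a"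
    and "\<And>t. poly2 N a 1 t = 0" "\<And>t. poly2 N a (-1) t = 0"
    and "\<And>t. poly2 N a t 1 = 0" "\<And>t. poly2 N a t (-1) = 0"
  obtains w where "total_degree_less (n - 4) w"
    "\<And>x y. poly2 N a x y = (x^2 - 1) * (y^2 - 1) * poly2 N w x y"
proof -
  obtain b where b: "total_degree_less (n - 2) b"
    and ab: "\<And>x y. poly2 N a x y = (x^2 - 1) * poly2 N b x y"
    using poly2_factor_x_sq_minus_1 a assms(2,3) by blast
  have b_zero: "poly2 N b x s = 0" if s: "s = 1 \<or> s = -1" for x s
  proof (rule poly2_eq_0_on_line_if_cofinite[of "{1, -1}"])
    fix x :: real assume "x \<notin> {1, -1}"
    then have "x^2 - 1 \<noteq> 0" by (auto simp: power2_eq_1_iff)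
    moreover have "(x^2 - 1) * poly2 N b x s = 0" using s assms(4,5) by (auto simp flip: ab)
    ultimately show "poly2 N b x s = 0" by simp
  qed simp
  obtain w where w: "total_degree_less (n - 2 - 2) w"
    and bw: "\<And>x y. poly2 N (\<lambda>i j. b j i) x y = (x^2 - 1) * poly2 N w x y"
    using poly2_factor_x_sq_minus_1[of "n - 2" "\<lambda>i j. b j i" N] b b_zero
    by (auto simp: poly2_transpose[of N b] total_degree_less_transpose[of _ b])
  show ?thesis
  proof (rule that)
    show "total_degree_less (n - 4) (\<lambda>i j. w j i)"
      using w by (simp add: total_degree_less_transpose[of _ w])
    fix x y :: real
    have "poly2 N a x y = (x^2 - 1) * poly2 N (\<lambda>i j. b j i) y x"
      by (simp add: ab poly2_transpose[of N b])
    also have "\<dots> = (x^2 - 1) * (y^2 - 1) * poly2 N (\<lambda>i j. w j i) x y"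
      by (simp add: bw poly2_transpose[of N w])
    finally show "poly2 N a x y = (x^2 - 1) * (y^2 - 1) * poly2 N (\<lambda>i j. w j i) x y" .
  qed
qed

section \<open>The space \<open>R\<^sub>m\<close>\<close>

lemma R_space_as_poly2:
  assumes "v \<in> R_space m" "m \<noteq> 0"
  obtains c d where "total_degree_less (Suc m) c" "d = 0 \<or> 2 \<le> m"
    "\<And>x y. v (x, y) = poly2 m c x y + d * (x ^ m * y - x * y ^ m)"
proof -
  obtain p d where p: "p \<in> poly2_space m"
    and v: "v = (\<lambda>(x, y). p (x, y) + d * (x ^ m * y - x * y ^ m))"
    using assms(1) by (auto simp: R_space_def)
  obtain c where c: "total_degree_less (Suc m) c" and pc: "p = (\<lambda>(x, y). poly2 m c x y)"
    using p poly2_space_iff_poly2[of m m] by auto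
  show ?thesis
  proof (cases "m = 1")
    case True
    \<comment> \<open>the extra term \<open>x y - x y\<close> vanishes, so \<open>d\<close> may be taken \<open>0\<close>\<close>
    then show ?thesis using that[of c 0] c by (simp add: v pc)
  next
    case False
    then show ?thesis using that[of c d] c assms(2) by (simp add: v pc)
  qed
qed

lemma edge_trace_legendre_multiple:
  fixes c :: "nat \<Rightarrow> nat \<Rightarrow> real"
  assumes c: "total_degree_less (Suc m) c" and d: "d = 0 \<or> 2 \<le> m"
    and f: "\<And>t. f t = poly2 m c s t + d * (s ^ m * t - s * t ^ m)"
    and zero: "\<forall>g\<in>gauss_nodes m. f g = 0"
  shows "f t = f 1 * poly (legendre m) t"
    and "c 0 m - d * s = f 1 * lead_coeff (legendre m)"
proof -
  define q where "q = (\<Sum>j\<le>m. monom (\<Sum>i\<le>m. c i j * s ^ i) j) + smult d (monom (s ^ m) 1 - monom s m)"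
  have poly_q: "poly q z = f z" for z
    by (simp add: q_def f poly_sum poly_monom poly2_by_powers_of_y algebra_simps)
  have coeff_q: "coeff q k = (if k \<le> m then \<Sum>i\<le>m. c i k * s ^ i else 0)
      + d * ((if k = 1 then s ^ m else 0) - (if k = m then s else 0))" for k
    by (simp add: q_def coeff_sum)
  have "degree q \<le> m"
    using d by (intro degree_le) (auto simp: coeff_q)
  then have "q = smult (poly q 1) (legendre m)"
    using zero by (intro legendre_multiple_if_vanishing_on_gauss_nodes) (simp_all add: poly_q)
  then have q_eq: "q = smult (f 1) (legendre m)" by (simp only: poly_q)
  then show "f t = f 1 * poly (legendre m) t" using poly_q[of t] by simp
  have "(\<Sum>i\<le>m. c i m * s ^ i) = (\<Sum>i\<in>{0}. c i m * s ^ i)"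
    using c by (intro sum.mono_neutral_right) (auto simp: total_degree_less_def)
  then have "coeff q m = c 0 m - d * s"
    using d by (auto simp: coeff_q)
  then show "c 0 m - d * s = f 1 * lead_coeff (legendre m)"
    by (simp add: q_eq)
qed

lemma R_space_gauss_boundary_trace_zero:
  assumes "odd m" and c: "total_degree_less (Suc m) c" and d: "d = 0 \<or> 2 \<le> m"
    and v: "\<And>x y. v (x, y) = poly2 m c x y + d * (x ^ m * y - x * y ^ m)"
    and zero: "\<forall>z\<in>gauss_boundary m. v z = 0"
  shows "d = 0" and "\<And>t. v (1, t) = 0" "\<And>t. v (-1, t) = 0" "\<And>t. v (t, 1) = 0" "\<And>t. v (t, -1) = 0"
proof -
  let ?P = "legendre m" and ?V = "v (1, 1)" and ?lc = "lead_coeff (legendre m)"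
  have zero_on_nodes: "v (1, g) = 0" "v (-1, g) = 0" "v (g, 1) = 0" "v (g, -1) = 0"
    if "g \<in> gauss_nodes m" for g
    using zero that by (auto simp: gauss_boundary_def)
  have cT: "total_degree_less (Suc m) (\<lambda>i j. c j i)"
    using c by (simp add: total_degree_less_transpose[of _ c])
  have dT: "- d = 0 \<or> 2 \<le> m" using d by simp
  have vT: "v (t, s) = poly2 m (\<lambda>i j. c j i) s t + (- d) * (s ^ m * t - s * t ^ m)" for s t
    by (simp add: v poly2_transpose[of m c] algebra_simps)
  have vertical: "v (s, t) = v (s, 1) * poly ?P t" "c 0 m - d * s = v (s, 1) * ?lc"
    if "s = 1 \<or> s = -1" for s t
  proof -
    have "\<forall>g\<in>gauss_nodes m. v (s, g) = 0" using that zero_on_nodes by auto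
    note trace = edge_trace_legendre_multiple[where f = "\<lambda>t. v (s, t)" and s = s, OF c d v this]
    show "v (s, t) = v (s, 1) * poly ?P t" "c 0 m - d * s = v (s, 1) * ?lc"
      by (fact trace(1), fact trace(2))
  qed
  have horizontal: "v (t, s) = v (1, s) * poly ?P t" "c m 0 + d * s = v (1, s) * ?lc"
    if "s = 1 \<or> s = -1" for s t
  proof -
    have "\<forall>g\<in>gauss_nodes m. v (g, s) = 0" using that zero_on_nodes by auto
    note trace = edge_trace_legendre_multiple[where f = "\<lambda>t. v (t, s)" and s = s, OF cT dT vT this]
    show "v (t, s) = v (1, s) * poly ?P t" by (fact trace(1))
    show "c m 0 + d * s = v (1, s) * ?lc" using trace(2) by simp
  qed
  have "poly ?P (-1) = -1" using \<open>odd m\<close> by (simp add: poly_legendre_neg_one)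
  then have corners: "v (-1, 1) = - ?V" "v (1, -1) = - ?V"
    using vertical(1)[of 1 "-1"] horizontal(1)[of 1 "-1"] by simp_all
  have right: "c 0 m - d = ?V * ?lc" and left: "c 0 m + d = - ?V * ?lc"
    and top: "c m 0 + d = ?V * ?lc" and bottom: "c m 0 - d = - ?V * ?lc"
    using vertical(2)[of 1] vertical(2)[of "-1"] horizontal(2)[of 1] horizontal(2)[of "-1"] corners
    by simp_all
  from right left top bottom have "?V * ?lc = 0" "d = 0" by linarith+
  then have "?V = 0" using lead_coeff_legendre_pos[of m] by simp
  with \<open>d = 0\<close> vertical(1)[of 1] vertical(1)[of "-1"] horizontal(1)[of 1] horizontal(1)[of "-1"] corners
  show "d = 0" "\<And>t. v (1, t) = 0" "\<And>t. v (-1, t) = 0" "\<And>t. v (t, 1) = 0" "\<And>t. v (t, -1) = 0"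
    by simp_all
qed

lemma R_space_gauss_boundary_bubble_factor:
  assumes "odd m" "v \<in> R_space m" "\<forall>z\<in>gauss_boundary m. v z = 0"
  obtains w where "total_degree_less (m - 3) w"
    "\<And>x y. v (x, y) = (x^2 - 1) * (y^2 - 1) * poly2 m w x y"
proof -
  have "m \<noteq> 0" using assms(1) by (rule odd_pos[THEN less_imp_neq, symmetric])
  with assms(2) obtain c d where c: "total_degree_less (Suc m) c" and d: "d = 0 \<or> 2 \<le> m"
    and v: "\<And>x y. v (x, y) = poly2 m c x y + d * (x ^ m * y - x * y ^ m)"
    using R_space_as_poly2 by blast
  note trace = R_space_gauss_boundary_trace_zero[OF assms(1) c d v assms(3)]
  then have v_poly2: "v (x, y) = poly2 m c x y" for x y
    using v by simp
  have edges: "poly2 m c 1 t = 0" "poly2 m c (-1) t = 0" "poly2 m c t 1 = 0" "poly2 m c t (-1) = 0"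
    for t
    using trace by (simp_all flip: v_poly2)
  obtain w where w: "total_degree_less (Suc m - 4) w"
    and cw: "\<And>x y. poly2 m c x y = (x^2 - 1) * (y^2 - 1) * poly2 m w x y"
    using poly2_factor_boundary[OF c edges] by blast
  show ?thesis
  proof (rule that)
    show "total_degree_less (m - 3) w" using w by simp
    show "v (x, y) = (x^2 - 1) * (y^2 - 1) * poly2 m w x y" for x y
      by (simp add: v_poly2 cw)
  qed
qed

lemma unisolventD:
  assumes "unisolvent n S" "p \<in> poly2_space n" "q \<in> poly2_space n" "\<And>z. z \<in> S \<Longrightarrow> p z = q z"
  shows "p = q"
  using assms unfolding unisolvent_def by blast

lemma bubble_multiple_eq_0_by_unisolvence:
  assumes "unisolvent n I" "I \<subseteq> {-1<..<1} \<times> {-1<..<1}" "total_degree_less (Suc n) w" "n \<le> N"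
    and "\<And>x y. (x, y) \<in> I \<Longrightarrow> (x^2 - 1) * (y^2 - 1) * poly2 N w x y = 0"
  shows "poly2 N w x y = 0"
proof -
  have "(\<lambda>(x, y). poly2 N w x y) \<in> poly2_space n"
    unfolding poly2_space_iff_poly2[OF assms(4)] using assms(3) by blast
  moreover have "(\<lambda>_. 0) \<in> poly2_space n"
    by (auto simp: poly2_space_def intro!: exI[of _ "\<lambda>_ _. 0"])
  moreover have "poly2 N w x y = 0" if "(x, y) \<in> I" for x y
  proof -
    have "x \<in> {-1<..<1}" "y \<in> {-1<..<1}" using that assms(2) by auto
    then have "x^2 \<noteq> 1" "y^2 \<noteq> 1" by (auto simp: power2_eq_1_iff)
    then show ?thesis using assms(5)[OF that] by simp
  qed
  ultimately have "(\<lambda>(x, y). poly2 N w x y) = (\<lambda>_. 0)"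
    by (intro unisolventD[OF assms(1)]) auto
  then show ?thesis by (simp add: fun_eq_iff)
qed

theorem theorem2p1:
  fixes k m :: nat and I :: "(real \<times> real) set" and v :: "real \<times> real \<Rightarrow> real"
  assumes hm: "m = 2 * k + 1"
    and hI_small: "k \<le> 1 \<Longrightarrow> I = {}"
    and hI_fin: "finite I"
    and hI_card: "k \<ge> 2 \<Longrightarrow> card I = (2 * k - 1) * (k - 1)"
    and hI_int: "I \<subseteq> {-1<..<1} \<times> {-1<..<1}"
    and hI_uni: "k \<ge> 2 \<Longrightarrow> unisolvent (2 * k - 3) I"
    and hv: "v \<in> R_space m"
    and hvG: "\<forall>z \<in> gauss_boundary m. v z = 0"
    and hvI: "\<forall>z \<in> I. v z = 0"
  shows "v = (\<lambda>_. 0)"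
proof -
  have "odd m" using hm by simp
  then obtain w where w: "total_degree_less (m - 3) w"
    and vw: "\<And>x y. v (x, y) = (x^2 - 1) * (y^2 - 1) * poly2 m w x y"
    using R_space_gauss_boundary_bubble_factor hv hvG by blast
  have w_zero: "poly2 m w x y = 0" for x y
  proof (cases "k \<ge> 2")
    case True
    have "m - 3 = Suc (2 * k - 3)" using True hm by simp
    with w have deg: "total_degree_less (Suc (2 * k - 3)) w" by simp
    have "2 * k - 3 \<le> m" using hm by simp
    moreover have "(x^2 - 1) * (y^2 - 1) * poly2 m w x y = 0" if "(x, y) \<in> I" for x y
      using hvI that by (simp flip: vw)
    ultimately show ?thesis
      by (rule bubble_multiple_eq_0_by_unisolvence[OF hI_uni[OF True] hI_int deg])
  next
    case False
    then have "m - 3 = 0" using hm by simp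
    with w show ?thesis by (simp add: poly2_eq_0_if_total_degree_less_0)
  qed
  show ?thesis
  proof
    fix z :: "real \<times> real"
    show "v z = 0" by (cases z) (simp add: vw w_zero)
  qed
qed

end
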